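(* Let $F$ be a continuous function defined on a rectangle $R=[a,b]\times[c,d]$ ($a<b$, $c<d$) with values in $\mathbb{R}^m$, and let $\mathcal{C}(F_{|\partial R})$ be the Coons patch interpolating $F$ on $\partial R$, namely $$\mathcal{C}(F_{|\partial R})(s,t)=\tfrac{b-s}{b-a}F(a,t)+\tfrac{s-a}{b-a}F(b,t)+\tfrac{d-t}{d-c}F(s,c)+\tfrac{t-c}{d-c}F(s,d)-B(s,t),$$ where $B(s,t)=\tfrac{b-s}{b-a}\big(\tfrac{d-t}{d-c}F(a,c)+\tfrac{t-c}{d-c}F(a,d)\big)+\tfrac{s-a}{b-a}\big(\tfrac{d-t}{d-c}F(b,c)+\tfrac{t-c}{d-c}F(b,d)\big)$. Then for all $(s,t)\in(a,b)\times(c,d)$, $$F(s,t)-\mathcal{C}(F_{|\partial R})(s,t)=\frac{(s-a)(s-b)(t-c)(t-d)}{(b-a)(d-c)}\Big([b,s;d,t]F-[s,a;d,t]F+[s,a;t,c]F-[b,s;t,c]F\Big).$$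
   Context: For a bivariate function $F$ and reals $\sigma_1\ne\sigma_2$, $\tau_1\ne\tau_2$, the mixed second divided difference is $[\sigma_1,\sigma_2;\tau_1,\tau_2]F=\frac{F(\sigma_1,\tau_1)+F(\sigma_2,\tau_2)-F(\sigma_2,\tau_1)-F(\sigma_1,\tau_2)}{(\sigma_1-\sigma_2)(\tau_1-\tau_2)}$. *)

theory Defs
  imports "HOL-Analysis.Analysis"
begin

definition mixed_dd :: "(real \<times> real \<Rightarrow> 'v::real_vector) \<Rightarrow> real \<Rightarrow> real \<Rightarrow> real \<Rightarrow> real \<Rightarrow> 'v" where
  "mixed_dd F s1 s2 t1 t2 =
     (F (s1, t1) + F (s2, t2) - F (s2, t1) - F (s1, t2)) /\<^sub>R ((s1 - s2) * (t1 - t2))"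

definition coons_bilinear :: "real \<Rightarrow> real \<Rightarrow> real \<Rightarrow> real \<Rightarrow> (real \<times> real \<Rightarrow> 'v::real_vector) \<Rightarrow> real \<times> real \<Rightarrow> 'v" where
  "coons_bilinear a b c d F = (\<lambda>(s, t).
     ((b - s) / (b - a)) *\<^sub>R (((d - t) / (d - c)) *\<^sub>R F (a, c) + ((t - c) / (d - c)) *\<^sub>R F (a, d))
   + ((s - a) / (b - a)) *\<^sub>R (((d - t) / (d - c)) *\<^sub>R F (b, c) + ((t - c) / (d - c)) *\<^sub>R F (b, d)))"

definition coons_patch :: "real \<Rightarrow> real \<Rightarrow> real \<Rightarrow> real \<Rightarrow> (real \<times> real \<Rightarrow> 'v::real_vector) \<Rightarrow> real \<times> real \<Rightarrow> 'v" where
  "coons_patch a b c d F = (\<lambda>(s, t).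
     ((b - s) / (b - a)) *\<^sub>R F (a, t) + ((s - a) / (b - a)) *\<^sub>R F (b, t)
   + ((d - t) / (d - c)) *\<^sub>R F (s, c) + ((t - c) / (d - c)) *\<^sub>R F (s, d)
   - coons_bilinear a b c d F (s, t))"

end

theory Submission
  imports Defs
begin

text \<open>With the barycentric weights \<open>\<alpha> = (b-s)/(b-a)\<close>, \<open>\<beta> = (s-a)/(b-a)\<close>, \<open>\<gamma> = (d-t)/(d-c)\<close>,
  \<open>\<delta> = (t-c)/(d-c)\<close>, the factor in front of each divided difference cancels its denominator
  and leaves the product of the two weights belonging to the opposite sub-rectangle. The
  remainder is therefore a weighted sum of the four twists \<open>F(s\<^sub>1,t\<^sub>1) + F(s\<^sub>2,t\<^sub>2) - F(s\<^sub>2,t\<^sub>1) - F(s\<^sub>1,t\<^sub>2)\<close>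
  of the sub-rectangles cut out by \<open>(s,t)\<close>, and expanding these against \<open>\<alpha> + \<beta> = 1 = \<gamma> + \<delta>\<close>
  gives exactly \<open>F(s,t)\<close> minus the Coons patch.\<close>

lemma scaleR_mixed_dd:
  assumes "s1 \<noteq> s2" "t1 \<noteq> t2"
  shows "r *\<^sub>R mixed_dd F s1 s2 t1 t2
    = (r / ((s1 - s2) * (t1 - t2))) *\<^sub>R (F (s1, t1) + F (s2, t2) - F (s2, t1) - F (s1, t2))"
  by (simp add: mixed_dd_def divide_inverse)

lemma bilinear_remainder_eq_weighted_twists:
  fixes x xat xbt xsc xsd xac xad xbc xbd :: "'v::real_vector"
  assumes "\<alpha> + \<beta> = 1" "\<gamma> + \<delta> = 1"
  shows "x - (\<alpha> *\<^sub>R xat + \<beta> *\<^sub>R xbt + \<gamma> *\<^sub>R xsc + \<delta> *\<^sub>R xsd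
           - (\<alpha> *\<^sub>R (\<gamma> *\<^sub>R xac + \<delta> *\<^sub>R xad) + \<beta> *\<^sub>R (\<gamma> *\<^sub>R xbc + \<delta> *\<^sub>R xbd)))
    = (\<beta> * \<delta>) *\<^sub>R (xbd + x - xsd - xbt) - (\<alpha> * \<delta>) *\<^sub>R (xsd + xat - xad - x)
      + (\<alpha> * \<gamma>) *\<^sub>R (x + xac - xat - xsc) - (\<beta> * \<gamma>) *\<^sub>R (xbt + xsc - x - xbc)"
proof -
  have \<beta>: "\<beta> = 1 - \<alpha>" and \<delta>: "\<delta> = 1 - \<gamma>"
    using assms by simp_all
  show ?thesis
    by (simp add: \<beta> \<delta> algebra_simps scaleR_diff_left)
qed

lemma coons_patch_remainder:
  fixes F :: "real \<times> real \<Rightarrow> 'v::real_vector"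
  assumes "a \<noteq> b" "c \<noteq> d" "s \<noteq> a" "s \<noteq> b" "t \<noteq> c" "t \<noteq> d"
  shows "F (s, t) - coons_patch a b c d F (s, t) =
    ((s - a) * (s - b) * (t - c) * (t - d) / ((b - a) * (d - c))) *\<^sub>R
      (mixed_dd F b s d t - mixed_dd F s a d t + mixed_dd F s a t c - mixed_dd F b s t c)"
proof -
  define M where "M = (s - a) * (b - s) * (t - c) * (d - t) / ((b - a) * (d - c))"
  have M_eq: "(s - a) * (s - b) * (t - c) * (t - d) / ((b - a) * (d - c)) = M"
    unfolding M_def by algebra
  define \<alpha> \<beta> \<gamma> \<delta> where "\<alpha> = (b - s) / (b - a)" and "\<beta> = (s - a) / (b - a)"
    and "\<gamma> = (d - t) / (d - c)" and "\<delta> = (t - c) / (d - c)"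
  have weights: "\<alpha> + \<beta> = 1" "\<gamma> + \<delta> = 1"
    using assms by (simp_all add: \<alpha>_def \<beta>_def \<gamma>_def \<delta>_def divide_simps)
  have "M / ((b - s) * (d - t)) = \<beta> * \<delta>" "M / ((s - a) * (d - t)) = \<alpha> * \<delta>"
    "M / ((s - a) * (t - c)) = \<alpha> * \<gamma>" "M / ((b - s) * (t - c)) = \<beta> * \<gamma>"
    using assms by (simp_all add: M_def \<alpha>_def \<beta>_def \<gamma>_def \<delta>_def divide_simps ac_simps)
  then have "M *\<^sub>R (mixed_dd F b s d t - mixed_dd F s a d t + mixed_dd F s a t c - mixed_dd F b s t c)
    = (\<beta> * \<delta>) *\<^sub>R (F (b, d) + F (s, t) - F (s, d) - F (b, t))
      - (\<alpha> * \<delta>) *\<^sub>R (F (s, d) + F (a, t) - F (a, d) - F (s, t))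
      + (\<alpha> * \<gamma>) *\<^sub>R (F (s, t) + F (a, c) - F (a, t) - F (s, c))
      - (\<beta> * \<gamma>) *\<^sub>R (F (b, t) + F (s, c) - F (s, t) - F (b, c))"
    using assms by (simp add: scaleR_diff_right scaleR_add_right scaleR_mixed_dd)
  also have "\<dots> = F (s, t) - coons_patch a b c d F (s, t)"
    using bilinear_remainder_eq_weighted_twists[OF weights, of "F (s, t)"]
    by (simp add: coons_patch_def coons_bilinear_def \<alpha>_def \<beta>_def \<gamma>_def \<delta>_def)
  finally show ?thesis
    by (simp only: M_eq)
qed

theorem proposition1:
  fixes F :: "real \<times> real \<Rightarrow> real ^ 'm" and a b c d s t :: real
  assumes "a < b" and "c < d"
    and "continuous_on ({a..b} \<times> {c..d}) F"
    and "s \<in> {a<..<b}" and "t \<in> {c<..<d}"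
  shows "F (s, t) - coons_patch a b c d F (s, t) =
    ((s - a) * (s - b) * (t - c) * (t - d) / ((b - a) * (d - c))) *\<^sub>R
      (mixed_dd F b s d t - mixed_dd F s a d t + mixed_dd F s a t c - mixed_dd F b s t c)"
  using assms by (intro coons_patch_remainder) auto

end
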